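(* Let $N\ge 2$ and $T\ge 1$, let $U$ be any unitary on the Hilbert space with orthonormal basis $\{|z;i\rangle: z,i\ge 0 \text{ integers}\}$, and let $S\subseteq\{0,1\}^N$ be the set of non-decreasing bit strings $x$ with $x_{N-1}=1$, with $f(x)=\min\{i: x_i=1\}$. For $x\in S$ and $j\ge 0$ let $|\psi_x^j\rangle=(UO_x)^jU|0\rangle$, where $O_x|z;i\rangle=(-1)^{x_i}|z;i\rangle$ for $0\le i<N$ and $O_x|z;i\rangle=|z;i\rangle$ for $i\ge N$. Define the weight $\omega(x,y)=\frac{1}{f(y)-f(x)}$ if $0\le f(x)<f(y)<N$ and $\omega(x,y)=0$ otherwise, and $$W_j=\sum_{x,y\in S}\omega(x,y)\,\langle\psi_x^j|\psi_y^j\rangle.$$ Then for every $j$ with $0\le j<T$, $|W_j-W_{j+1}|\le \pi N$. *)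

theory Defs
  imports "HOL-Analysis.Analysis"
begin

text \<open>Vectors of the Hilbert space l2 over the orthonormal basis |z;i>, indexed by pairs (z,i) of naturals.\<close>
type_synonym vec = "nat \<times> nat \<Rightarrow> complex"

definition ell2 :: "vec set" where
  "ell2 = {v. (\<lambda>k. (cmod (v k))\<^sup>2) summable_on UNIV}"

definition cinner :: "vec \<Rightarrow> vec \<Rightarrow> complex" where
  "cinner v w = infsum (\<lambda>k. cnj (v k) * w k) UNIV"

definition unitary_op :: "(vec \<Rightarrow> vec) \<Rightarrow> bool" where
  "unitary_op U \<longleftrightarrow>
     (\<forall>v\<in>ell2. U v \<in> ell2) \<and>
     (\<forall>v\<in>ell2. \<forall>w\<in>ell2. U (\<lambda>k. v k + w k) = (\<lambda>k. U v k + U w k)) \<and>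
     (\<forall>c. \<forall>v\<in>ell2. U (\<lambda>k. c * v k) = (\<lambda>k. c * U v k)) \<and>
     (\<forall>v\<in>ell2. \<forall>w\<in>ell2. cinner (U v) (U w) = cinner v w) \<and>
     U ` ell2 = ell2"

definition ket0 :: vec where
  "ket0 = (\<lambda>k. if k = (0, 0) then 1 else 0)"

text \<open>Bit strings of length N are lists; x ! i is the bit x_i.\<close>
definition Sset :: "nat \<Rightarrow> bool list set" where
  "Sset N = {x. length x = N \<and> sorted x \<and> x ! (N - 1)}"

definition fpos :: "bool list \<Rightarrow> nat" where
  "fpos x = (LEAST i. i < length x \<and> x ! i)"

definition Ox :: "bool list \<Rightarrow> vec \<Rightarrow> vec" where
  "Ox x v = (\<lambda>(z, i). if i < length x \<and> x ! i then - v (z, i) else v (z, i))"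

definition psi :: "(vec \<Rightarrow> vec) \<Rightarrow> bool list \<Rightarrow> nat \<Rightarrow> vec" where
  "psi U x j = ((U \<circ> Ox x) ^^ j) (U ket0)"

definition omega :: "nat \<Rightarrow> bool list \<Rightarrow> bool list \<Rightarrow> real" where
  "omega N x y = (if fpos x < fpos y \<and> fpos y < N then 1 / real (fpos y - fpos x) else 0)"

definition Wj :: "(vec \<Rightarrow> vec) \<Rightarrow> nat \<Rightarrow> nat \<Rightarrow> complex" where
  "Wj U N j = (\<Sum>x\<in>Sset N. \<Sum>y\<in>Sset N. of_real (omega N x y) * cinner (psi U x j) (psi U y j))"

end

theory Submission
  imports Defs
begin

text \<open>
  Unitarity of U gives W_j - W_(j+1) = sum over x, y of omega(x,y) times
  (<psi_x|psi_y> - <O_x psi_x|O_y psi_y>), and the oracles act diagonally, so this is a sum over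
  the basis vectors |z;i> of sums over x, y of omega(x,y) (1 - (-1)^(x_i + y_i)) times the product
  of the amplitudes of psi_x and psi_y at |z;i>. For f(x) < f(y) the sign factor is 2 exactly
  when f(x) <= i < f(y); writing f(y) - f(x) = (i - f(x)) + (f(y) - i - 1) + 1, the inner double
  sum is a bilinear form in the Hilbert matrix 1/(p + q + 1), so Hilbert's inequality bounds it by
  pi times the total weight of |z;i> in all the states. Summing over the basis, the states being
  unit vectors, gives pi |S| <= pi N.

  Hilbert's inequality is proved by the Schur test with the weights sqrt (p + 1/2): each row sum
  is sqrt c times a midpoint Riemann sum of the convex function 1/((c + t) sqrt t), c = p + 1/2,
  hence at most sqrt c times its integral over [0, infinity), which is pi.
\<close>

section \<open>Hilbert's inequality\<close>

definition hilbert_density :: "real \<Rightarrow> real \<Rightarrow> real" where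
  "hilbert_density c t = 1 / ((c + t) * sqrt t)"

definition hilbert_primitive :: "real \<Rightarrow> real \<Rightarrow> real" where
  "hilbert_primitive c t = 2 / sqrt c * arctan (sqrt t / sqrt c)"

lemma hilbert_density_above_tangent:
  assumes "t > 0" "m > 0" "c > 0"
  shows "hilbert_density c m - (3 * m + c) / (2 * (c + m)\<^sup>2 * m * sqrt m) * (t - m)
           \<le> hilbert_density c t"
proof -
  define u v where "u = sqrt t" and "v = sqrt m"
  have u: "u > 0" "t = u\<^sup>2" and v: "v > 0" "m = v\<^sup>2"
    using assms by (auto simp: u_def v_def)
  \<comment> \<open>with denominators cleared, the gap between the two sides is (u - v)^2 R\<close>
  define R where "R = 2 * v * c\<^sup>2 + 4 * v ^ 3 * c + 2 * v ^ 5 + u * c\<^sup>2 + 3 * u * v\<^sup>2 * c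
    + 4 * u * v ^ 4 + 2 * u\<^sup>2 * v * c + 6 * u\<^sup>2 * v ^ 3 + u ^ 3 * c + 3 * u ^ 3 * v\<^sup>2"
  have "R \<ge> 0" unfolding R_def using u v assms by simp
  define A B where "A = c + u\<^sup>2" and "B = c + v\<^sup>2"
  have "A > 0" "B > 0" using assms by (auto simp: A_def B_def add_pos_nonneg)
  have "1 / (A * u) - (1 / (B * v) - (3 * v\<^sup>2 + c) / (2 * B\<^sup>2 * v\<^sup>2 * v) * (u\<^sup>2 - v\<^sup>2))
        = (u - v)\<^sup>2 * R / (2 * A * u * B\<^sup>2 * v ^ 3)"
    using u(1) v(1) \<open>A > 0\<close> \<open>B > 0\<close>
    by (simp add: field_simps) (unfold A_def B_def R_def, algebra)
  moreover have "(u - v)\<^sup>2 * R / (2 * A * u * B\<^sup>2 * v ^ 3) \<ge> 0"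
    using u v \<open>A > 0\<close> \<open>B > 0\<close> \<open>R \<ge> 0\<close> by simp
  ultimately show ?thesis
    unfolding hilbert_density_def u_def[symmetric] v_def[symmetric] using u v A_def B_def by simp
qed

lemma has_real_derivative_hilbert_primitive:
  assumes "t > 0" "c > 0"
  shows "(hilbert_primitive c has_real_derivative hilbert_density c t) (at t)"
proof -
  have "(sqrt t / sqrt c)\<^sup>2 = t / c" "sqrt c * sqrt c = c"
    using assms by (simp_all add: power_divide)
  then show ?thesis
    unfolding hilbert_primitive_def hilbert_density_def using assms
    by (auto intro!: derivative_eq_intros simp: divide_simps)
qed

lemma continuous_on_hilbert_primitive: "c > 0 \<Longrightarrow> continuous_on A (hilbert_primitive c)"
  unfolding hilbert_primitive_def by (intro continuous_intros) auto

lemma midpoint_le_diff_if_above_tangent: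
  fixes G g :: "real \<Rightarrow> real"
  assumes "h \<ge> 0"
    and "continuous_on {m - h..m + h} G"
    and "\<And>t. m - h < t \<Longrightarrow> t < m + h \<Longrightarrow> (G has_real_derivative g t) (at t)"
    and "\<And>t. m - h < t \<Longrightarrow> t < m + h \<Longrightarrow> g m + d * (t - m) \<le> g t"
  shows "2 * h * g m \<le> G (m + h) - G (m - h)"
proof -
  define \<phi> where "\<phi> t = G t - g m * t - d * (t - m)\<^sup>2 / 2" for t
  have "\<phi> (m - h) \<le> \<phi> (m + h)"
  proof (rule DERIV_nonneg_imp_increasing_open[where f = \<phi>])
    fix t assume t: "m - h < t" "t < m + h"
    have "(\<phi> has_real_derivative g t - g m - d * (t - m)) (at t)"
      unfolding \<phi>_def using assms(3)[OF t] by (auto intro!: derivative_eq_intros)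
    then show "\<exists>y. (\<phi> has_real_derivative y) (at t) \<and> 0 \<le> y"
      using assms(4)[OF t] by force
  next
    show "continuous_on {m - h..m + h} \<phi>"
      unfolding \<phi>_def using assms(2) by (intro continuous_intros) auto
  qed (use assms(1) in simp)
  then show ?thesis
    unfolding \<phi>_def by (simp add: algebra_simps power2_eq_square)
qed

lemma hilbert_density_le_primitive_diff:
  assumes "m \<ge> 1/2" "c > 0"
  shows "hilbert_density c m \<le> hilbert_primitive c (m + 1/2) - hilbert_primitive c (m - 1/2)"
proof -
  have "2 * (1/2) * hilbert_density c m
          \<le> hilbert_primitive c (m + 1/2) - hilbert_primitive c (m - 1/2)"
  proof (rule midpoint_le_diff_if_above_tangent
      [where d = "- (3 * m + c) / (2 * (c + m)\<^sup>2 * m * sqrt m)"])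
    show "continuous_on {m - 1/2..m + 1/2} (hilbert_primitive c)"
      using assms(2) by (rule continuous_on_hilbert_primitive)
    fix t assume "m - 1/2 < t" "t < m + 1/2"
    then have "t > 0" using assms(1) by simp
    show "(hilbert_primitive c has_real_derivative hilbert_density c t) (at t)"
      using \<open>t > 0\<close> assms(2) by (rule has_real_derivative_hilbert_primitive)
    show "hilbert_density c m + - (3 * m + c) / (2 * (c + m)\<^sup>2 * m * sqrt m) * (t - m)
            \<le> hilbert_density c t"
      using hilbert_density_above_tangent[OF \<open>t > 0\<close> _ assms(2), of m] assms(1)
      by (simp only: minus_divide_left[symmetric] mult_minus_left) simp
  qed simp
  then show ?thesis by simp
qed

definition schur_weight :: "nat \<Rightarrow> nat \<Rightarrow> real" where
  "schur_weight p q = sqrt ((real p + 1/2) / (real q + 1/2)) / (real p + real q + 1)"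

lemma schur_weight_nonneg: "schur_weight p q \<ge> 0"
  unfolding schur_weight_def by simp

lemma sum_schur_weight_lessThan_le_pi: "(\<Sum>q<M. schur_weight p q) \<le> pi"
proof -
  define c where "c = real p + 1/2"
  have "c > 0" unfolding c_def by simp
  have "schur_weight p q = sqrt c * hilbert_density c (real q + 1/2)" for q
    unfolding schur_weight_def hilbert_density_def c_def by (simp add: real_sqrt_divide)
  then have "(\<Sum>q<M. schur_weight p q) = (\<Sum>q<M. sqrt c * hilbert_density c (real q + 1/2))"
    by simp
  also have "\<dots> \<le> (\<Sum>q<M. sqrt c * (hilbert_primitive c (real (Suc q)) - hilbert_primitive c (real q)))"
    using hilbert_density_le_primitive_diff[of "real _ + 1/2" c] \<open>c > 0\<close>
    by (intro sum_mono mult_left_mono) (auto simp: add_ac)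
  also have "\<dots> = sqrt c * (hilbert_primitive c (real M) - hilbert_primitive c 0)"
    using sum_lessThan_telescope[of "\<lambda>q. hilbert_primitive c (real q)" M]
    by (simp add: sum_distrib_left[symmetric])
  also have "\<dots> = 2 * arctan (sqrt (real M) / sqrt c)"
    using \<open>c > 0\<close> unfolding hilbert_primitive_def by simp
  also have "\<dots> \<le> pi"
    using arctan_ubound[of "sqrt (real M) / sqrt c"] by simp
  finally show ?thesis .
qed

lemma sum_schur_weight_le_pi:
  assumes "finite Y" "inj_on q Y"
  shows "(\<Sum>y\<in>Y. schur_weight p (q y)) \<le> pi"
proof -
  have "(\<Sum>y\<in>Y. schur_weight p (q y)) = (\<Sum>k\<in>q ` Y. schur_weight p k)"
    using assms(2) by (simp add: sum.reindex)
  also have "\<dots> \<le> (\<Sum>k<Suc (Max (q ` Y)). schur_weight p k)"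
    using assms(1) by (intro sum_mono2) (auto simp: less_Suc_eq_le schur_weight_nonneg)
  also have "\<dots> \<le> pi"
    by (rule sum_schur_weight_lessThan_le_pi)
  finally show ?thesis .
qed

lemma two_mult_div_le_schur_weight:
  fixes a b :: real
  shows "2 * a * b / (real p + real q + 1) \<le> schur_weight p q * a\<^sup>2 + schur_weight q p * b\<^sup>2"
proof -
  define r where "r = sqrt ((real p + 1/2) / (real q + 1/2))"
  have "r > 0" unfolding r_def by simp
  have "sqrt ((real q + 1/2) / (real p + 1/2)) = 1 / r"
    unfolding r_def by (simp add: real_sqrt_divide)
  then have weights: "schur_weight p q = r / (real p + real q + 1)"
    "schur_weight q p = (1 / r) / (real p + real q + 1)"
    unfolding schur_weight_def r_def by (simp_all add: add_ac)
  have "0 \<le> (r * a - b)\<^sup>2 / r" using \<open>r > 0\<close> by simp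
  also have "\<dots> = r * a\<^sup>2 + b\<^sup>2 / r - 2 * a * b"
    using \<open>r > 0\<close> by (simp add: field_simps power2_eq_square)
  finally have "2 * a * b \<le> r * a\<^sup>2 + b\<^sup>2 / r" by simp
  then have "2 * a * b / (real p + real q + 1) \<le> (r * a\<^sup>2 + b\<^sup>2 / r) / (real p + real q + 1)"
    by (simp add: divide_right_mono)
  then show ?thesis
    unfolding weights by (simp add: add_divide_distrib)
qed

theorem hilbert_inequality:
  fixes a :: "'a \<Rightarrow> real" and b :: "'b \<Rightarrow> real"
  assumes "finite X" "finite Y" "inj_on p X" "inj_on q Y"
  shows "(\<Sum>x\<in>X. \<Sum>y\<in>Y. 2 * a x * b y / (real (p x) + real (q y) + 1))
           \<le> pi * ((\<Sum>x\<in>X. (a x)\<^sup>2) + (\<Sum>y\<in>Y. (b y)\<^sup>2))"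
proof -
  have "(\<Sum>x\<in>X. \<Sum>y\<in>Y. 2 * a x * b y / (real (p x) + real (q y) + 1))
      \<le> (\<Sum>x\<in>X. \<Sum>y\<in>Y. schur_weight (p x) (q y) * (a x)\<^sup>2 + schur_weight (q y) (p x) * (b y)\<^sup>2)"
    by (intro sum_mono two_mult_div_le_schur_weight)
  also have "\<dots> = (\<Sum>x\<in>X. (\<Sum>y\<in>Y. schur_weight (p x) (q y)) * (a x)\<^sup>2)
                 + (\<Sum>y\<in>Y. (\<Sum>x\<in>X. schur_weight (q y) (p x)) * (b y)\<^sup>2)"
    by (simp add: sum.distrib sum_distrib_right sum.swap[of _ Y X])
  also have "\<dots> \<le> (\<Sum>x\<in>X. pi * (a x)\<^sup>2) + (\<Sum>y\<in>Y. pi * (b y)\<^sup>2)"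
    using assms by (intro add_mono sum_mono mult_right_mono sum_schur_weight_le_pi) auto
  finally show ?thesis by (simp add: sum_distrib_left distrib_left)
qed

corollary hilbert_inequality_straddling:
  fixes A :: "'a \<Rightarrow> real" and f :: "'a \<Rightarrow> nat"
  assumes "finite X" "inj_on f X"
  shows "(\<Sum>x\<in>X. \<Sum>y\<in>X. if f x \<le> i \<and> i < f y then 2 * A x * A y / real (f y - f x) else 0)
           \<le> pi * (\<Sum>x\<in>X. (A x)\<^sup>2)"
proof -
  define L R where "L = {x \<in> X. f x \<le> i}" and "R = {y \<in> X. i < f y}"
  have "(\<Sum>x\<in>X. \<Sum>y\<in>X. if f x \<le> i \<and> i < f y then 2 * A x * A y / real (f y - f x) else 0)
      = (\<Sum>x\<in>X. if f x \<le> i then \<Sum>y\<in>R. 2 * A x * A y / real (f y - f x) else 0)"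
    unfolding R_def using assms(1)
    by (intro sum.cong) (auto simp: sum.inter_filter simp del: of_nat_diff)
  also have "\<dots> = (\<Sum>x\<in>L. \<Sum>y\<in>R. 2 * A x * A y / real (f y - f x))"
    unfolding L_def using assms(1) by (simp add: sum.inter_filter)
  also have "\<dots> = (\<Sum>x\<in>L. \<Sum>y\<in>R. 2 * A x * A y / (real (i - f x) + real (f y - i - 1) + 1))"
    unfolding L_def R_def by (intro sum.cong refl) (auto simp: of_nat_diff)
  also have "\<dots> \<le> pi * ((\<Sum>x\<in>L. (A x)\<^sup>2) + (\<Sum>y\<in>R. (A y)\<^sup>2))"
    using assms unfolding L_def R_def by (intro hilbert_inequality) (auto simp: inj_on_def)
  also have "(\<Sum>x\<in>L. (A x)\<^sup>2) + (\<Sum>y\<in>R. (A y)\<^sup>2) = (\<Sum>x\<in>X. (A x)\<^sup>2)"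
    unfolding L_def R_def using assms(1) by (subst sum.union_disjoint[symmetric]) (auto intro: sum.cong)
  finally show ?thesis .
qed

section \<open>Monotone bit strings\<close>

lemma Sset_nth_iff:
  assumes "x \<in> Sset N" "i < N"
  shows "x ! i \<longleftrightarrow> fpos x \<le> i"
proof -
  have len: "length x = N" and "sorted x" and last: "x ! (N - 1)"
    using assms(1) unfolding Sset_def by auto
  have first: "x ! fpos x"
    unfolding fpos_def by (rule LeastI2[of _ "N - 1"]) (use len last assms(2) in auto)
  show ?thesis
  proof
    assume "x ! i"
    then show "fpos x \<le> i" unfolding fpos_def using assms(2) len by (intro Least_le) simp
  next
    assume "fpos x \<le> i"
    then have "x ! fpos x \<le> x ! i"
      using \<open>sorted x\<close> assms(2) len by (simp add: sorted_iff_nth_mono)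
    then show "x ! i" using first by (simp add: le_bool_def)
  qed
qed

lemma fpos_less_if_Sset:
  assumes "x \<in> Sset N" "N \<ge> 1"
  shows "fpos x < N"
  using Sset_nth_iff[OF assms(1), of "N - 1"] assms unfolding Sset_def by auto

lemma inj_on_fpos_Sset: "inj_on fpos (Sset N)"
proof (rule inj_onI)
  fix x y assume "x \<in> Sset N" "y \<in> Sset N" "fpos x = fpos y"
  moreover from this have "length x = N" "length y = N" unfolding Sset_def by auto
  ultimately show "x = y" using Sset_nth_iff by (intro nth_equalityI) auto
qed

lemma finite_Sset: "finite (Sset N)"
  using finite_lists_length_eq[of "UNIV :: bool set" N]
  by (rule finite_subset[rotated]) (auto simp: Sset_def)

lemma card_Sset_le:
  assumes "N \<ge> 1"
  shows "card (Sset N) \<le> N"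
proof -
  have "card (Sset N) \<le> card {..<N}"
    by (rule card_inj_on_le[OF inj_on_fpos_Sset]) (use fpos_less_if_Sset[OF _ assms] in auto)
  then show ?thesis by simp
qed

section \<open>Amplitudes and the oracle\<close>

lemma has_sum_sum:
  fixes f :: "'i \<Rightarrow> 'a \<Rightarrow> 'b::topological_comm_monoid_add"
  assumes "finite I" "\<And>i. i \<in> I \<Longrightarrow> (f i has_sum s i) A"
  shows "((\<lambda>k. \<Sum>i\<in>I. f i k) has_sum (\<Sum>i\<in>I. s i)) A"
  using assms by (induction I rule: finite_induct) (simp_all add: has_sum_add)

lemma has_sum_diff:
  fixes f g :: "'a \<Rightarrow> 'b::topological_ab_group_add"
  assumes "(f has_sum a) A" "(g has_sum b) A"
  shows "((\<lambda>k. f k - g k) has_sum (a - b)) A"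
proof -
  have "((\<lambda>k. - g k) has_sum - b) A" using assms(2) by (simp add: has_sum_uminus)
  from has_sum_add[OF assms(1) this] show ?thesis by simp
qed

lemma abs_summable_cnj_mult:
  assumes "v \<in> ell2" "w \<in> ell2"
  shows "(\<lambda>k. norm (cnj (v k) * w k)) summable_on UNIV"
proof (rule Infinite_Sum.abs_summable_on_comparison_test)
  show "(\<lambda>k. norm ((cmod (v k))\<^sup>2 + (cmod (w k))\<^sup>2)) summable_on UNIV"
    using assms unfolding ell2_def by (auto intro: summable_on_add)
  show "norm (cnj (v k) * w k) \<le> norm ((cmod (v k))\<^sup>2 + (cmod (w k))\<^sup>2)" for k
  proof -
    have "0 \<le> cmod (v k) * cmod (w k)"
      and "2 * cmod (v k) * cmod (w k) \<le> (cmod (v k))\<^sup>2 + (cmod (w k))\<^sup>2"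
      and "norm (cnj (v k) * w k) = cmod (v k) * cmod (w k)"
      and "norm ((cmod (v k))\<^sup>2 + (cmod (w k))\<^sup>2) = (cmod (v k))\<^sup>2 + (cmod (w k))\<^sup>2"
      by (simp_all add: sum_squares_bound norm_mult)
    then show ?thesis by linarith
  qed
qed

lemma has_sum_cinner:
  assumes "v \<in> ell2" "w \<in> ell2"
  shows "((\<lambda>k. cnj (v k) * w k) has_sum cinner v w) UNIV"
  unfolding cinner_def using abs_summable_summable[OF abs_summable_cnj_mult[OF assms]] by simp

lemma has_sum_norm_square:
  assumes "v \<in> ell2"
  shows "((\<lambda>k. (cmod (v k))\<^sup>2) has_sum Re (cinner v v)) UNIV"
  using has_sum_Re[OF has_sum_cinner[OF assms assms]] unfolding cmod_power2
  by (simp add: power2_eq_square)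

definition oracle_sign :: "bool list \<Rightarrow> nat \<times> nat \<Rightarrow> complex" where
  "oracle_sign x k = (if snd k < length x \<and> x ! snd k then -1 else 1)"

lemma Ox_apply: "Ox x v k = oracle_sign x k * v k"
  unfolding Ox_def oracle_sign_def by (cases k) auto

lemma norm_oracle_sign [simp]: "cmod (oracle_sign x k) = 1"
  and cnj_oracle_sign [simp]: "cnj (oracle_sign x k) = oracle_sign x k"
  and oracle_sign_mult_self [simp]: "oracle_sign x k * oracle_sign x k = 1"
  unfolding oracle_sign_def by auto

lemma Ox_ell2: "v \<in> ell2 \<Longrightarrow> Ox x v \<in> ell2"
  unfolding ell2_def by (simp add: Ox_apply norm_mult)

lemma has_sum_cinner_minus_cinner_Ox:
  assumes "v \<in> ell2" "w \<in> ell2"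
  shows "((\<lambda>k. (1 - oracle_sign x k * oracle_sign y k) * (cnj (v k) * w k))
           has_sum (cinner v w - cinner (Ox x v) (Ox y w))) UNIV"
proof -
  have "((\<lambda>k. cnj (Ox x v k) * Ox y w k) has_sum cinner (Ox x v) (Ox y w)) UNIV"
    using assms by (intro has_sum_cinner Ox_ell2)
  then show ?thesis
    using has_sum_diff[OF has_sum_cinner[OF assms]]
    by (simp add: Ox_apply algebra_simps)
qed

lemma cinner_Ox_Ox:
  assumes "v \<in> ell2"
  shows "cinner (Ox x v) (Ox x v) = cinner v v"
proof -
  have "((\<lambda>k :: nat \<times> nat. 0) has_sum (cinner v v - cinner (Ox x v) (Ox x v))) UNIV"
    using has_sum_cinner_minus_cinner_Ox[OF assms assms, of x x] by simp
  then show ?thesis using has_sum_unique[OF _ has_sum_0_simp] by force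
qed

lemma ket0_ell2: "ket0 \<in> ell2"
  unfolding ell2_def summable_on_def mem_Collect_eq
  by (intro exI has_sum_finite_neutralI[where B = "{(0, 0)}"]) (auto simp: ket0_def)

lemma cinner_ket0_ket0: "cinner ket0 ket0 = 1"
  unfolding cinner_def
  by (intro infsumI has_sum_finite_neutralI[where B = "{(0, 0)}"]) (auto simp: ket0_def)

lemma psi_0: "psi U x 0 = U ket0"
  and psi_Suc: "psi U x (Suc j) = U (Ox x (psi U x j))"
  unfolding psi_def by simp_all

lemma psi_ell2: "unitary_op U \<Longrightarrow> psi U x j \<in> ell2"
  by (induction j) (auto simp: psi_0 psi_Suc unitary_op_def ket0_ell2 Ox_ell2)

lemma cinner_psi_psi: "unitary_op U \<Longrightarrow> cinner (psi U x j) (psi U x j) = 1"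
  by (induction j)
     (auto simp: psi_0 psi_Suc unitary_op_def ket0_ell2 cinner_ket0_ket0 Ox_ell2 psi_ell2 cinner_Ox_Ox)

lemma has_sum_norm_square_psi:
  "unitary_op U \<Longrightarrow> ((\<lambda>k. (cmod (psi U x j k))\<^sup>2) has_sum 1) UNIV"
  using has_sum_norm_square[OF psi_ell2] cinner_psi_psi by fastforce

section \<open>The potential W_j\<close>

lemma omega_mult_sign_gap:
  assumes "x \<in> Sset N" "y \<in> Sset N" "N \<ge> 1"
  shows "of_real (omega N x y) * ((1 - oracle_sign x k * oracle_sign y k) * z)
           = of_real (if fpos x \<le> snd k \<and> snd k < fpos y then 2 / real (fpos y - fpos x) else 0) * z"
proof (cases "fpos x < fpos y \<and> fpos y < N")
  case True
  have "length x = N" "length y = N" using assms unfolding Sset_def by auto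
  then show ?thesis
    using True Sset_nth_iff[OF assms(1)] Sset_nth_iff[OF assms(2)]
    unfolding omega_def oracle_sign_def by auto
qed (use fpos_less_if_Sset[OF assms(2,3)] in \<open>auto simp: omega_def\<close>)

lemma norm_sum_omega_sign_gap_le:
  fixes a :: "bool list \<Rightarrow> complex"
  assumes "N \<ge> 1"
  shows "norm (\<Sum>x\<in>Sset N. \<Sum>y\<in>Sset N.
                 of_real (omega N x y) * ((1 - oracle_sign x k * oracle_sign y k) * (cnj (a x) * a y)))
           \<le> pi * (\<Sum>x\<in>Sset N. (cmod (a x))\<^sup>2)"
proof -
  let ?i = "snd k"
  have "norm (\<Sum>x\<in>Sset N. \<Sum>y\<in>Sset N.
                of_real (omega N x y) * ((1 - oracle_sign x k * oracle_sign y k) * (cnj (a x) * a y)))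
      \<le> (\<Sum>x\<in>Sset N. \<Sum>y\<in>Sset N. norm (of_real (omega N x y)
                * ((1 - oracle_sign x k * oracle_sign y k) * (cnj (a x) * a y))))"
    by (rule order_trans[OF norm_sum sum_mono]) (rule norm_sum)
  also have "\<dots> = (\<Sum>x\<in>Sset N. \<Sum>y\<in>Sset N. if fpos x \<le> ?i \<and> ?i < fpos y
                   then 2 * cmod (a x) * cmod (a y) / real (fpos y - fpos x) else 0)"
    using assms by (intro sum.cong refl) (simp add: omega_mult_sign_gap norm_mult)
  also have "\<dots> \<le> pi * (\<Sum>x\<in>Sset N. (cmod (a x))\<^sup>2)"
    by (rule hilbert_inequality_straddling[OF finite_Sset inj_on_fpos_Sset])
  finally show ?thesis .
qed

lemma has_sum_Wj_diff:
  assumes "unitary_op U"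
  shows "((\<lambda>k. \<Sum>x\<in>Sset N. \<Sum>y\<in>Sset N. of_real (omega N x y)
             * ((1 - oracle_sign x k * oracle_sign y k) * (cnj (psi U x j k) * psi U y j k)))
           has_sum (Wj U N j - Wj U N (Suc j))) UNIV"
proof -
  let ?\<psi> = "\<lambda>x. psi U x j"
  have unitary: "cinner (U v) (U w) = cinner v w" if "v \<in> ell2" "w \<in> ell2" for v w
    using assms that unfolding unitary_op_def by blast
  have "Wj U N (Suc j) = (\<Sum>x\<in>Sset N. \<Sum>y\<in>Sset N.
          of_real (omega N x y) * cinner (Ox x (?\<psi> x)) (Ox y (?\<psi> y)))"
    unfolding Wj_def psi_Suc by (simp add: unitary Ox_ell2 psi_ell2[OF assms])
  then have "Wj U N j - Wj U N (Suc j) = (\<Sum>x\<in>Sset N. \<Sum>y\<in>Sset N.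
          of_real (omega N x y) * (cinner (?\<psi> x) (?\<psi> y) - cinner (Ox x (?\<psi> x)) (Ox y (?\<psi> y))))"
    unfolding Wj_def by (simp add: sum_subtractf right_diff_distrib)
  then show ?thesis
    using assms
    by (auto intro!: has_sum_sum finite_Sset has_sum_cmult_right has_sum_cinner_minus_cinner_Ox
             psi_ell2)
qed

theorem lemma4:
  fixes N T j :: nat and U :: "vec \<Rightarrow> vec"
  assumes "N \<ge> 2" and "T \<ge> 1" and "unitary_op U" and "j < T"
  shows "cmod (Wj U N j - Wj U N (j + 1)) \<le> pi * real N"
proof -
  have "((\<lambda>k. pi * (\<Sum>x\<in>Sset N. (cmod (psi U x j k))\<^sup>2)) has_sum pi * real (card (Sset N))) UNIV"
    using has_sum_sum[OF finite_Sset has_sum_norm_square_psi[OF assms(3)]]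
    by (simp add: has_sum_cmult_right)
  then have "cmod (Wj U N j - Wj U N (Suc j)) \<le> pi * real (card (Sset N))"
    by (rule norm_infsum_le[OF has_sum_Wj_diff[OF assms(3)]])
       (rule norm_sum_omega_sign_gap_le, use assms(1) in simp)
  also have "\<dots> \<le> pi * real N"
    using card_Sset_le assms(1) by simp
  finally show ?thesis by simp
qed

end
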